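(* Let $X_1,\dots,X_n$ be i.i.d. from a distribution $\mathrm{P}$, let $1\le k<n$, and let $s$ be a real-valued permutation-symmetric kernel of $k$ arguments with $\mathbb{E}[s(X_1,\dots,X_k)^2]<\infty$. For each $k$-subset $S\subseteq\{1,\dots,n\}$ write $s(X_S)$ for the kernel evaluated at the observations indexed by $S$. Define $$e_j=\binom{n-1}{k-1}^{-1}\sum_{S\ni j}s(X_S),\qquad s_0=\binom{n}{k}^{-1}\sum_S s(X_S),\qquad \mathrm{ps}\text{-}\mathrm{IJ}_\mathrm{U}=\frac{k^2}{n^2}\sum_{j=1}^n(e_j-s_0)^2 .$$ Then $$\mathbb{E}[\mathrm{ps}\text{-}\mathrm{IJ}_\mathrm{U}]=\sum_{j=1}^k r_j\binom{k}{j}^2\binom{n}{j}^{-1}V_j,\qquad r_j=\left(\frac{n-k}{n}\right)^2\frac{j}{1-j/n}.$$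
   Context: Hoeffding (H-)decomposition: let $\theta=\mathbb{E}[s(X_1,\dots,X_k)]$ and for $c=1,\dots,k$ let $s_c(x_1,\dots,x_c)=\mathbb{E}[s(x_1,\dots,x_c,X_{c+1},\dots,X_k)]-\theta$. Define recursively $s^1=s_1$ and $s^c(x_1,\dots,x_c)=s_c(x_1,\dots,x_c)-\sum_{\emptyset\ne A\subsetneq\{1,\dots,c\}}s^{|A|}(x_A)$. Set $V_j=\mathrm{Var}(s^j(X_1,\dots,X_j))$. (For reference, the U-statistic $s_0$ has variance $\sum_{j=1}^k\binom{k}{j}^2\binom{n}{j}^{-1}V_j$.) *)

theory Defs
  imports "HOL-Probability.Probability"
begin

text \<open>A kernel of k arguments is a function on lists (of length k).
  P is the common distribution of the observations.\<close>

definition kernel_mean :: "('b list \<Rightarrow> real) \<Rightarrow> 'b measure \<Rightarrow> nat \<Rightarrow> real" where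
  "kernel_mean s P k = (\<integral>y. s (map y [0..<k]) \<partial>(PiM {..<k} (\<lambda>_. P)))"

definition hsc :: "('b list \<Rightarrow> real) \<Rightarrow> 'b measure \<Rightarrow> nat \<Rightarrow> 'b list \<Rightarrow> real" where
  "hsc s P k xs =
     (\<integral>y. s (xs @ map y [0..<k - length xs]) \<partial>(PiM {..<k - length xs} (\<lambda>_. P)))
     - kernel_mean s P k"

lemma hterm_term_aux:
  assumes "A \<subseteq> {..<length xs}" "A \<noteq> {..<length xs}"
  shows "length (nths xs A) < length xs"
proof -
  have "{i. i < length xs \<and> i \<in> A} = A" using assms(1) by auto
  moreover have "card A < card {..<length xs}"
    using assms by (meson finite_lessThan psubsetI psubset_card_mono)
  ultimately show ?thesis by (simp add: length_nths)
qed

function hterm :: "('b list \<Rightarrow> real) \<Rightarrow> 'b measure \<Rightarrow> nat \<Rightarrow> 'b list \<Rightarrow> real" where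
  "hterm s P k xs = hsc s P k xs -
     (\<Sum>A\<in>{A. A \<subseteq> {..<length xs} \<and> A \<noteq> {} \<and> A \<noteq> {..<length xs}}.
        hterm s P k (nths xs A))"
  by auto
termination
  by (relation "Wellfounded.measure (\<lambda>(s, P, k, xs). length xs)") (auto intro: hterm_term_aux)

declare hterm.simps[simp del]

definition hvar :: "('b list \<Rightarrow> real) \<Rightarrow> 'b measure \<Rightarrow> nat \<Rightarrow> nat \<Rightarrow> real" where
  "hvar s P k j =
     (\<integral>y. (hterm s P k (map y [0..<j])
            - (\<integral>z. hterm s P k (map z [0..<j]) \<partial>(PiM {..<j} (\<lambda>_. P))))\<^sup>2
        \<partial>(PiM {..<j} (\<lambda>_. P)))"

text \<open>s(X_S) for a finite index set S (symmetry makes the order irrelevant).\<close>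
definition kernel_at :: "('b list \<Rightarrow> real) \<Rightarrow> (nat \<Rightarrow> 'a \<Rightarrow> 'b) \<Rightarrow> nat set \<Rightarrow> 'a \<Rightarrow> real" where
  "kernel_at s X S \<omega> = s (map (\<lambda>i. X i \<omega>) (sorted_list_of_set S))"

definition e_stat :: "('b list \<Rightarrow> real) \<Rightarrow> (nat \<Rightarrow> 'a \<Rightarrow> 'b) \<Rightarrow> nat \<Rightarrow> nat \<Rightarrow> nat \<Rightarrow> 'a \<Rightarrow> real" where
  "e_stat s X n k j \<omega> = (1 / real ((n - 1) choose (k - 1))) *
     (\<Sum>S\<in>{S. S \<subseteq> {1..n} \<and> card S = k \<and> j \<in> S}. kernel_at s X S \<omega>)"

definition s0_stat :: "('b list \<Rightarrow> real) \<Rightarrow> (nat \<Rightarrow> 'a \<Rightarrow> 'b) \<Rightarrow> nat \<Rightarrow> nat \<Rightarrow> 'a \<Rightarrow> real" where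
  "s0_stat s X n k \<omega> = (1 / real (n choose k)) *
     (\<Sum>S\<in>{S. S \<subseteq> {1..n} \<and> card S = k}. kernel_at s X S \<omega>)"

definition psIJ_U :: "('b list \<Rightarrow> real) \<Rightarrow> (nat \<Rightarrow> 'a \<Rightarrow> 'b) \<Rightarrow> nat \<Rightarrow> nat \<Rightarrow> 'a \<Rightarrow> real" where
  "psIJ_U s X n k \<omega> = (real k ^ 2 / real n ^ 2) *
     (\<Sum>j=1..n. (e_stat s X n k j \<omega> - s0_stat s X n k \<omega>)\<^sup>2)"

end

theory Submission
  imports Defs
begin

text \<open>
  Work on the product space \<open>P\<^bsup>{1..n}\<^esup>\<close>, which by independence is the joint law of
  \<open>X\<^sub>1, \<dots>, X\<^sub>n\<close>, and write \<open>H\<^sub>T\<close> for \<open>s\<^bsup>|T|\<^esup>\<close> evaluated at the coordinates in \<open>T\<close>.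
  The recursive definition of the Hoeffding terms says exactly that
  \<open>s(X\<^sub>S) = \<theta> + \<Sum>\<^bsub>\<emptyset> \<noteq> A \<subseteq> S\<^esub> H\<^sub>A\<close>, so \<open>e\<^sub>j - s\<^sub>0 = \<Sum>\<^sub>T c\<^sub>j(T) H\<^sub>T\<close> with coefficients
  that count the \<open>k\<close>-subsets containing \<open>T\<close> (and \<open>j\<close>).

  The \<open>H\<^sub>T\<close> are orthogonal with \<open>E[H\<^sub>T\<^sup>2] = V\<^bsub>|T|\<^esub>\<close>: by symmetry of \<open>s\<close>, integrating
  \<open>s\<^bsub>|T|\<^esub>(X\<^sub>T)\<close> over the coordinates outside \<open>J\<close> gives \<open>s\<^bsub>|T \<inter> J|\<^esub>(X\<^bsub>T \<inter> J\<^esub>)\<close>, and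
  an induction on \<open>|T|\<close> turns this into \<open>E[H\<^sub>T g] = 0\<close> for every \<open>g\<close> not depending on some
  coordinate of \<open>T\<close>. Hence \<open>E[ps-IJ\<^sub>U] = k\<^sup>2/n\<^sup>2 \<Sum>\<^sub>T V\<^bsub>|T|\<^esub> \<Sum>\<^sub>j c\<^sub>j(T)\<^sup>2\<close>; the inner sum depends
  only on \<open>|T|\<close>, and counting the \<open>T\<close> of each size turns the weights into \<open>r\<^sub>j\<close>.
\<close>

section \<open>Square-integrable functions\<close>

definition square_integrable :: "'a measure \<Rightarrow> ('a \<Rightarrow> real) \<Rightarrow> bool" where
  "square_integrable M f \<longleftrightarrow> f \<in> borel_measurable M \<and> integrable M (\<lambda>x. (f x)\<^sup>2)"

lemma square_integrable_mult:
  assumes "square_integrable M f" "square_integrable M g"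
  shows "integrable M (\<lambda>x. f x * g x)"
proof (rule Bochner_Integration.integrable_bound)
  show "integrable M (\<lambda>x. (f x)\<^sup>2 + (g x)\<^sup>2)" "(\<lambda>x. f x * g x) \<in> borel_measurable M"
    using assms by (auto simp: square_integrable_def)
  have "\<bar>f x * g x\<bar> \<le> (f x)\<^sup>2 + (g x)\<^sup>2" for x
  proof -
    have "2 * \<bar>f x\<bar> * \<bar>g x\<bar> \<le> (f x)\<^sup>2 + (g x)\<^sup>2"
      using sum_squares_bound[of "\<bar>f x\<bar>" "\<bar>g x\<bar>"] by simp
    moreover have "0 \<le> \<bar>f x\<bar> * \<bar>g x\<bar>" by simp
    ultimately show ?thesis unfolding abs_mult by linarith
  qed
  then show "AE x in M. norm (f x * g x) \<le> norm ((f x)\<^sup>2 + (g x)\<^sup>2)"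
    by simp
qed

lemma square_integrable_const: "finite_measure M \<Longrightarrow> square_integrable M (\<lambda>_. c)"
  by (auto simp: square_integrable_def finite_measure.integrable_const)

lemma square_integrable_integrable:
  "finite_measure M \<Longrightarrow> square_integrable M f \<Longrightarrow> integrable M f"
  by (simp add: square_integrable_def finite_measure.square_integrable_imp_integrable)

lemma square_integrable_add:
  assumes "square_integrable M f" "square_integrable M g"
  shows "square_integrable M (\<lambda>x. f x + g x)"
proof -
  have "integrable M (\<lambda>x. (f x)\<^sup>2 + (g x)\<^sup>2 + 2 * (f x * g x))"
    using assms square_integrable_mult[OF assms] by (auto simp: square_integrable_def)
  then show ?thesis
    using assms by (auto simp: square_integrable_def power2_sum algebra_simps)
qed

lemma square_integrable_cmult:
  "square_integrable M f \<Longrightarrow> square_integrable M (\<lambda>x. c * f x)"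
  by (auto simp: square_integrable_def power_mult_distrib)

lemma square_integrable_diff:
  assumes "square_integrable M f" "square_integrable M g"
  shows "square_integrable M (\<lambda>x. f x - g x)"
  using square_integrable_add[OF assms(1) square_integrable_cmult[OF assms(2), of "-1"]] by simp

lemma square_integrable_sum:
  assumes "finite_measure M" "\<And>i. i \<in> A \<Longrightarrow> square_integrable M (f i)"
  shows "square_integrable M (\<lambda>x. \<Sum>i\<in>A. f i x)"
  using assms(2)
  by (induction A rule: infinite_finite_induct)
     (simp_all add: square_integrable_const[OF assms(1)] square_integrable_add)

lemma square_integrable_cong:
  assumes "square_integrable M f" "\<And>x. x \<in> space M \<Longrightarrow> f x = g x"
  shows "square_integrable M g"
proof -
  have "integrable M (\<lambda>x. (f x)\<^sup>2) \<longleftrightarrow> integrable M (\<lambda>x. (g x)\<^sup>2)"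
    using assms(2) by (intro Bochner_Integration.integrable_cong) auto
  then show ?thesis
    using assms measurable_cong[of M f g] by (auto simp: square_integrable_def)
qed

lemma square_integrable_compose:
  assumes "T \<in> measurable M N" "distr M N T = N" "square_integrable N f"
  shows "square_integrable M (\<lambda>x. f (T x))"
  using assms integrable_distr_eq[OF assms(1), of "\<lambda>x. (f x)\<^sup>2"]
  by (auto simp: square_integrable_def)

lemma (in prob_space) square_integral_le_nn_integral_square:
  fixes f :: "'a \<Rightarrow> real"
  assumes f: "f \<in> borel_measurable M"
  shows "ennreal ((\<integral>x. f x \<partial>M)\<^sup>2) \<le> (\<integral>\<^sup>+x. ennreal ((f x)\<^sup>2) \<partial>M)"
proof (cases "integrable M (\<lambda>x. (f x)\<^sup>2)")
  case True
  have "integrable M f" using square_integrable_imp_integrable[OF f True] .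
  moreover have "0 \<le> variance f"
    by (rule Bochner_Integration.integral_nonneg) simp
  ultimately have "(\<integral>x. f x \<partial>M)\<^sup>2 \<le> (\<integral>x. (f x)\<^sup>2 \<partial>M)"
    using variance_eq[of f] True by simp
  then show ?thesis
    using True by (simp add: nn_integral_eq_integral)
next
  case False
  then show ?thesis
    using f nn_integral_nonneg_infinite[of "\<lambda>x. (f x)\<^sup>2" M] by simp
qed

section \<open>Products of the common distribution\<close>

locale symmetric_kernel =
  fixes P :: "'b measure" and s :: "'b list \<Rightarrow> real" and k :: nat
  assumes prob_space_P: "prob_space P"
    and symmetric: "\<And>xs ys. length xs = k \<Longrightarrow> mset xs = mset ys \<Longrightarrow> s xs = s ys"
    and kernel_measurable: "(\<lambda>y. s (map y [0..<k])) \<in> borel_measurable (PiM {..<k} (\<lambda>_. P))"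
    and kernel_square_integrable: "integrable (PiM {..<k} (\<lambda>_. P)) (\<lambda>y. (s (map y [0..<k]))\<^sup>2)"
begin

abbreviation PiP :: "nat set \<Rightarrow> (nat \<Rightarrow> 'b) measure" where
  "PiP I \<equiv> PiM I (\<lambda>_. P)"

abbreviation theta :: real where
  "theta \<equiv> kernel_mean s P k"

lemma product_prob_space_P: "product_prob_space (\<lambda>_. P)"
  unfolding product_prob_space_def product_prob_space_axioms_def product_sigma_finite_def
  using prob_space_P prob_space_imp_sigma_finite by blast

lemma prob_space_PiP: "finite I \<Longrightarrow> prob_space (PiP I)"
  by (intro prob_space_PiM prob_space_P)

lemma finite_measure_PiP: "finite I \<Longrightarrow> finite_measure (PiP I)"
  using prob_space_PiP prob_space_def by blast

definition reindex :: "nat list \<Rightarrow> (nat \<Rightarrow> 'b) \<Rightarrow> nat \<Rightarrow> 'b" where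
  "reindex L \<omega> = (\<lambda>j\<in>{..<length L}. \<omega> (L ! j))"

lemma measurable_reindex: "set L \<subseteq> K \<Longrightarrow> reindex L \<in> measurable (PiP K) (PiP {..<length L})"
  unfolding reindex_def by (intro measurable_restrict measurable_component_singleton) auto

lemma map_reindex: "map (reindex L \<omega>) [0..<length L] = map \<omega> L"
  by (rule nth_equalityI) (auto simp: reindex_def)

lemma distr_reindex:
  assumes "distinct L" "set L \<subseteq> K"
  shows "distr (PiP K) (PiP {..<length L}) (reindex L) = PiP {..<length L}"
proof -
  have "inj_on ((!) L) {..<length L}"
    using assms(1) by (simp add: inj_on_def nth_eq_iff_index_eq)
  moreover have "(!) L \<in> {..<length L} \<rightarrow> K" using assms(2) by auto
  ultimately show ?thesis
    using distr_PiM_reindex[of K "\<lambda>_. P" "(!) L" "{..<length L}"] prob_space_P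
    unfolding reindex_def by auto
qed

lemma integral_reindex:
  fixes F :: "(nat \<Rightarrow> 'b) \<Rightarrow> real"
  assumes "distinct L" "set L \<subseteq> K" "F \<in> borel_measurable (PiP {..<length L})"
  shows "(\<integral>\<omega>. F (reindex L \<omega>) \<partial>PiP K) = (\<integral>y. F y \<partial>PiP {..<length L})"
  using integral_distr[OF measurable_reindex[OF assms(2)] assms(3)] distr_reindex[OF assms(1,2)]
  by simp

lemma square_integrable_kernel:
  assumes "distinct L" "length L = k" "set L \<subseteq> K"
  shows "square_integrable (PiP K) (\<lambda>\<omega>. s (map \<omega> L))"
proof -
  have "square_integrable (PiP {..<length L}) (\<lambda>y. s (map y [0..<k]))"
    using kernel_measurable kernel_square_integrable assms(2)
    by (simp add: square_integrable_def)
  then have "square_integrable (PiP K) (\<lambda>\<omega>. s (map (reindex L \<omega>) [0..<k]))"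
    by (rule square_integrable_compose[OF measurable_reindex[OF assms(3)] distr_reindex[OF assms(1,3)]])
  then show ?thesis using map_reindex[of L] assms(2) by simp
qed

lemma measurable_kernel_append:
  assumes "set u \<subseteq> space P" "length u + m = k"
  shows "(\<lambda>y. s (u @ map y [0..<m])) \<in> borel_measurable (PiP {..<m})"
proof -
  define extend where "extend = (\<lambda>y. \<lambda>j\<in>{..<k}. (u @ map y [0..<m]) ! j)"
  have "extend \<in> measurable (PiP {..<m}) (PiP {..<k})"
    unfolding extend_def
  proof (intro measurable_restrict)
    fix j assume j: "j \<in> {..<k}"
    show "(\<lambda>y. (u @ map y [0..<m]) ! j) \<in> measurable (PiP {..<m}) P"
    proof (cases "j < length u")
      case True
      then have "u ! j \<in> space P" using assms(1) by auto
      then show ?thesis using True by (simp add: nth_append)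
    next
      case False
      then have "(\<lambda>y. (u @ map y [0..<m]) ! j) = (\<lambda>y. y (j - length u))"
        using j assms(2) by (auto simp: nth_append)
      then show ?thesis using False j assms(2) by simp
    qed
  qed
  moreover have "map (extend y) [0..<k] = u @ map y [0..<m]" for y
    unfolding extend_def using assms(2) by (intro nth_equalityI) auto
  ultimately show ?thesis
    using measurable_comp[OF _ kernel_measurable, of extend] by (simp add: comp_def)
qed

lemma distr_restrict_PiP:
  assumes "J \<subseteq> K" "finite K"
  shows "distr (PiP K) (PiP J) (\<lambda>\<omega>. restrict \<omega> J) = PiP J"
  using product_prob_space.distr_restrict[OF product_prob_space_P assms] by simp

lemma integral_restrict_PiP:
  fixes g :: "(nat \<Rightarrow> 'b) \<Rightarrow> real"
  assumes "J \<subseteq> K" "finite K" "g \<in> borel_measurable (PiP J)"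
  shows "(\<integral>\<omega>. g (restrict \<omega> J) \<partial>PiP K) = (\<integral>\<omega>. g \<omega> \<partial>PiP J)"
  using integral_distr[OF measurable_restrict_subset[OF assms(1)] assms(3)]
    distr_restrict_PiP[OF assms(1,2)] by simp

lemma square_integrable_restrict_PiP:
  assumes "J \<subseteq> K" "finite K" "square_integrable (PiP J) g"
  shows "square_integrable (PiP K) (\<lambda>\<omega>. g (restrict \<omega> J))"
  by (rule square_integrable_compose[OF measurable_restrict_subset[OF assms(1)]
        distr_restrict_PiP[OF assms(1,2)] assms(3)])

lemma measurable_merge_comp:
  fixes h :: "(nat \<Rightarrow> 'b) \<Rightarrow> real"
  assumes "h \<in> borel_measurable (PiP (A \<union> B))"
  shows "(\<lambda>(\<omega>, z). h (merge A B (\<omega>, z))) \<in> borel_measurable (PiP A \<Otimes>\<^sub>M PiP B)"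
  using measurable_comp[OF measurable_merge assms] by (simp add: comp_def case_prod_beta')

lemma measurable_integral_merge:
  fixes h :: "(nat \<Rightarrow> 'b) \<Rightarrow> real"
  assumes "finite B" "h \<in> borel_measurable (PiP (A \<union> B))"
  shows "(\<lambda>\<omega>. \<integral>z. h (merge A B (\<omega>, z)) \<partial>PiP B) \<in> borel_measurable (PiP A)"
proof -
  interpret sigma_finite_measure "PiP B"
    using prob_space_PiP[OF assms(1)] prob_space_imp_sigma_finite by blast
  show ?thesis
    by (rule borel_measurable_lebesgue_integral[where f="\<lambda>\<omega> z. h (merge A B (\<omega>, z))"])
       (use measurable_merge_comp[OF assms(2)] in simp)
qed

text \<open>By Jensen's inequality on each fibre and Tonelli's theorem.\<close>

lemma square_integrable_integral_merge:
  assumes "finite A" "finite B" "A \<inter> B = {}" "square_integrable (PiP (A \<union> B)) h"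
  shows "square_integrable (PiP A) (\<lambda>\<omega>. \<integral>z. h (merge A B (\<omega>, z)) \<partial>PiP B)"
proof -
  have h: "h \<in> borel_measurable (PiP (A \<union> B))"
    using assms(4) by (simp add: square_integrable_def)
  interpret B: prob_space "PiP B" using prob_space_PiP[OF assms(2)] .
  have "(\<integral>\<^sup>+\<omega>. ennreal ((\<integral>z. h (merge A B (\<omega>, z)) \<partial>PiP B)\<^sup>2) \<partial>PiP A)
      \<le> (\<integral>\<^sup>+\<omega>. (\<integral>\<^sup>+z. ennreal ((h (merge A B (\<omega>, z)))\<^sup>2) \<partial>PiP B) \<partial>PiP A)"
  proof (rule nn_integral_mono)
    fix \<omega> assume "\<omega> \<in> space (PiP A)"
    then have "(\<lambda>z. h (merge A B (\<omega>, z))) \<in> borel_measurable (PiP B)"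
      using measurable_Pair2[OF measurable_merge_comp[OF h]] by simp
    then show "ennreal ((\<integral>z. h (merge A B (\<omega>, z)) \<partial>PiP B)\<^sup>2)
        \<le> (\<integral>\<^sup>+z. ennreal ((h (merge A B (\<omega>, z)))\<^sup>2) \<partial>PiP B)"
      by (rule B.square_integral_le_nn_integral_square)
  qed
  also have "\<dots> = (\<integral>\<^sup>+w. ennreal ((h w)\<^sup>2) \<partial>PiP (A \<union> B))"
    using product_prob_space_P h
    by (intro product_sigma_finite.product_nn_integral_fold[OF _ assms(3,1,2), symmetric])
       (auto simp: product_prob_space_def)
  also have "\<dots> < \<infinity>"
    using assms(4) unfolding square_integrable_def integrable_iff_bounded by simp
  finally show ?thesis
    using measurable_integral_merge[OF assms(2) h]
    unfolding square_integrable_def integrable_iff_bounded by simp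
qed

lemma integral_integral_merge_mult:
  assumes "finite A" "finite B" "A \<inter> B = {}"
    and "square_integrable (PiP (A \<union> B)) h" "square_integrable (PiP A) g"
  shows "(\<integral>\<omega>. (\<integral>z. h (merge A B (\<omega>, z)) \<partial>PiP B) * g \<omega> \<partial>PiP A) =
         (\<integral>w. h w * g (restrict w A) \<partial>PiP (A \<union> B))"
proof -
  have "square_integrable (PiP (A \<union> B)) (\<lambda>w. g (restrict w A))"
    by (rule square_integrable_restrict_PiP) (use assms in auto)
  then have "integrable (PiP (A \<union> B)) (\<lambda>w. h w * g (restrict w A))"
    using assms(4) by (rule square_integrable_mult[rotated])
  then have "(\<integral>w. h w * g (restrict w A) \<partial>PiP (A \<union> B)) =
      (\<integral>\<omega>. (\<integral>z. h (merge A B (\<omega>, z)) * g (restrict (merge A B (\<omega>, z)) A) \<partial>PiP B) \<partial>PiP A)"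
    using product_prob_space_P
    by (intro product_sigma_finite.product_integral_fold[OF _ assms(3,1,2)])
       (auto simp: product_prob_space_def)
  also have "\<dots> = (\<integral>\<omega>. (\<integral>z. h (merge A B (\<omega>, z)) \<partial>PiP B) * g \<omega> \<partial>PiP A)"
  proof (rule Bochner_Integration.integral_cong[OF refl])
    fix \<omega> assume "\<omega> \<in> space (PiP A)"
    then have "restrict (merge A B (\<omega>, z)) A = \<omega>" for z
      by (auto simp: merge_def space_PiM PiE_def extensional_def fun_eq_iff)
    then show "(\<integral>z. h (merge A B (\<omega>, z)) * g (restrict (merge A B (\<omega>, z)) A) \<partial>PiP B) =
        (\<integral>z. h (merge A B (\<omega>, z)) \<partial>PiP B) * g \<omega>"
      by simp
  qed
  finally show ?thesis by simp
qed

end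

section \<open>Hoeffding terms on coordinate subsets\<close>

lemma nths_sorted_list_of_set:
  assumes "finite T" "B \<subseteq> {..<card T}"
  shows "nths (sorted_list_of_set T) B = sorted_list_of_set ((!) (sorted_list_of_set T) ` B)"
proof (rule sorted_distinct_set_unique)
  let ?L = "sorted_list_of_set T"
  have "finite ((!) ?L ` B)" using assms(2) finite_subset by blast
  moreover have "set (nths ?L B) = (!) ?L ` B"
    using assms by (auto simp: set_nths)
  ultimately show "set (nths ?L B) = set (sorted_list_of_set ((!) ?L ` B))" by simp
qed (auto simp: sorted_nths)

lemma bij_betw_image_proper_subsets:
  assumes "bij_betw f X T"
  shows "bij_betw (image f) {B. B \<subseteq> X \<and> B \<noteq> {} \<and> B \<noteq> X} {A. A \<subseteq> T \<and> A \<noteq> {} \<and> A \<noteq> T}"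
proof (rule bij_betw_subset[OF bij_betw_Pow[OF assms]])
  show "{B. B \<subseteq> X \<and> B \<noteq> {} \<and> B \<noteq> X} \<subseteq> Pow X" by auto
  have inj: "inj_on (image f) (Pow X)"
    using bij_betw_Pow[OF assms] bij_betw_imp_inj_on by blast
  have fX: "f ` X = T" using assms bij_betw_imp_surj_on by blast
  show "image f ` {B. B \<subseteq> X \<and> B \<noteq> {} \<and> B \<noteq> X} = {A. A \<subseteq> T \<and> A \<noteq> {} \<and> A \<noteq> T}"
  proof (intro equalityI subsetI)
    fix A assume "A \<in> image f ` {B. B \<subseteq> X \<and> B \<noteq> {} \<and> B \<noteq> X}"
    then obtain B where B: "B \<subseteq> X" "B \<noteq> {}" "B \<noteq> X" "A = f ` B" by auto
    have "f ` B \<noteq> T" using B fX inj_onD[OF inj, of B X] by auto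
    then show "A \<in> {A. A \<subseteq> T \<and> A \<noteq> {} \<and> A \<noteq> T}" using B fX by auto
  next
    fix A assume A: "A \<in> {A. A \<subseteq> T \<and> A \<noteq> {} \<and> A \<noteq> T}"
    then have "A \<in> image f ` Pow X"
      using bij_betw_Pow[OF assms] by (auto simp: bij_betw_def)
    then obtain B where B: "B \<subseteq> X" "A = f ` B" by auto
    then have "B \<noteq> {}" "B \<noteq> X" using A fX by auto
    then show "A \<in> image f ` {B. B \<subseteq> X \<and> B \<noteq> {} \<and> B \<noteq> X}"
      using B by auto
  qed
qed

lemma fresh_list:
  fixes I :: "nat set"
  assumes "finite I"
  obtains l where "distinct l" "set l \<inter> I = {}" "length l = m"
proof
  define N where "N = Suc (Max (insert 0 I))"
  have "\<forall>i\<in>I. i < N" using assms by (auto simp: N_def less_Suc_eq_le)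
  then show "distinct [N..<N+m]" "set [N..<N+m] \<inter> I = {}" "length [N..<N+m] = m"
    by auto
qed

context symmetric_kernel
begin

definition hsc_on :: "nat set \<Rightarrow> (nat \<Rightarrow> 'b) \<Rightarrow> real" where
  "hsc_on T \<omega> = hsc s P k (map \<omega> (sorted_list_of_set T))"

definition hterm_on :: "nat set \<Rightarrow> (nat \<Rightarrow> 'b) \<Rightarrow> real" where
  "hterm_on T \<omega> = hterm s P k (map \<omega> (sorted_list_of_set T))"

lemma hterm_on_rec:
  assumes "finite T"
  shows "hterm_on T \<omega> = hsc_on T \<omega> - (\<Sum>A | A \<subseteq> T \<and> A \<noteq> {} \<and> A \<noteq> T. hterm_on A \<omega>)"
proof -
  let ?L = "sorted_list_of_set T"
  let ?t = "card T"
  have bij: "bij_betw ((!) ?L) {..<?t} T"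
    by (rule bij_betw_nth) (use assms in auto)
  have "(\<Sum>B | B \<subseteq> {..<?t} \<and> B \<noteq> {} \<and> B \<noteq> {..<?t}. hterm s P k (nths (map \<omega> ?L) B))
      = (\<Sum>B | B \<subseteq> {..<?t} \<and> B \<noteq> {} \<and> B \<noteq> {..<?t}. hterm_on ((!) ?L ` B) \<omega>)"
    by (rule sum.cong[OF refl]) (use assms in \<open>simp add: nths_map nths_sorted_list_of_set hterm_on_def\<close>)
  also have "\<dots> = (\<Sum>A | A \<subseteq> T \<and> A \<noteq> {} \<and> A \<noteq> T. hterm_on A \<omega>)"
    by (rule sum.reindex_bij_betw[OF bij_betw_image_proper_subsets[OF bij]])
  finally show ?thesis
    unfolding hterm_on_def[of T] hsc_on_def using hterm.simps[of s P k "map \<omega> ?L"] assms by simp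
qed

lemma hsc_on_eq_sum_hterm_on:
  assumes "finite T"
  shows "hsc_on T \<omega> = (\<Sum>A | A \<subseteq> T \<and> A \<noteq> {}. hterm_on A \<omega>)"
proof (cases "T = {}")
  case True
  then show ?thesis by (simp add: hsc_on_def hsc_def kernel_mean_def)
next
  case False
  have "{A. A \<subseteq> T \<and> A \<noteq> {}} = insert T {A. A \<subseteq> T \<and> A \<noteq> {} \<and> A \<noteq> T}"
    using False by auto
  moreover have "finite {A. A \<subseteq> T \<and> A \<noteq> {} \<and> A \<noteq> T}" using assms by auto
  ultimately show ?thesis using hterm_on_rec[OF assms, of \<omega>] by simp
qed

lemma kernel_at_eq_sum_hterm_on:
  assumes "finite S" "card S = k"
  shows "kernel_at s (\<lambda>i \<omega>. \<omega> i) S \<omega> = theta + (\<Sum>A | A \<subseteq> S \<and> A \<noteq> {}. hterm_on A \<omega>)"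
proof -
  interpret prob_space "PiP {}" using prob_space_PiP[of "{}"] by simp
  have "hsc_on S \<omega> = kernel_at s (\<lambda>i \<omega>. \<omega> i) S \<omega> - theta"
    using assms by (simp add: hsc_on_def hsc_def kernel_at_def prob_space)
  then show ?thesis using hsc_on_eq_sum_hterm_on[OF assms(1)] by simp
qed

lemma hsc_on_restrict: "T \<subseteq> J \<Longrightarrow> finite T \<Longrightarrow> hsc_on T (restrict \<omega> J) = hsc_on T \<omega>"
  unfolding hsc_on_def by (intro arg_cong[where f="hsc s P k"]) auto

lemma hterm_on_restrict: "T \<subseteq> J \<Longrightarrow> finite T \<Longrightarrow> hterm_on T (restrict \<omega> J) = hterm_on T \<omega>"
  unfolding hterm_on_def by (intro arg_cong[where f="hterm s P k"]) auto

text \<open>The coordinates in \<open>E\<close> play the role of the missing arguments \<open>X\<^sub>c\<^sub>+\<^sub>1, \<dots>, X\<^sub>k\<close>.\<close>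

lemma hsc_on_eq_integral_merge:
  assumes "finite I" "I \<inter> E = {}" "U \<subseteq> I" "distinct l" "set l \<subseteq> E"
    "card U + length l = k" "\<omega> \<in> space (PiP I)"
  shows "hsc_on U \<omega> =
    (\<integral>z. s (map (merge I E (\<omega>, z)) (sorted_list_of_set U @ l)) \<partial>PiP E) - theta"
proof -
  have fU: "finite U" using assms(1,3) finite_subset by blast
  define u where "u = map \<omega> (sorted_list_of_set U)"
  have lu: "length u = card U" using fU by (simp add: u_def)
  have su: "set u \<subseteq> space P" using assms(3,7) fU by (auto simp: u_def space_PiM)
  have "(\<integral>z. s (map (merge I E (\<omega>, z)) (sorted_list_of_set U @ l)) \<partial>PiP E)
      = (\<integral>z. s (u @ map (reindex l z) [0..<length l]) \<partial>PiP E)"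
  proof (rule Bochner_Integration.integral_cong[OF refl])
    fix z
    have "map (merge I E (\<omega>, z)) (sorted_list_of_set U) = u"
      using assms(3) fU by (auto simp: u_def merge_def)
    moreover have "map (merge I E (\<omega>, z)) l = map z l"
      using assms(2,5) by (auto simp: merge_def)
    ultimately show "s (map (merge I E (\<omega>, z)) (sorted_list_of_set U @ l)) =
        s (u @ map (reindex l z) [0..<length l])"
      by (simp only: map_append map_reindex)
  qed
  also have "\<dots> = (\<integral>y. s (u @ map y [0..<length l]) \<partial>PiP {..<length l})"
    using measurable_kernel_append[OF su] lu assms(4-6)
    by (intro integral_reindex[where F="\<lambda>y. s (u @ map y [0..<length l])"]) auto
  moreover have "k - length u = length l" using lu assms(6) by simp
  ultimately show ?thesis unfolding hsc_on_def hsc_def u_def[symmetric] by simp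
qed

lemma square_integrable_hsc_on:
  assumes "finite I" "T \<subseteq> I" "card T \<le> k"
  shows "square_integrable (PiP I) (hsc_on T)"
proof -
  obtain l where l: "distinct l" "set l \<inter> I = {}" "length l = k - card T"
    using fresh_list[OF assms(1)] by blast
  have fT: "finite T" using assms finite_subset by blast
  have "square_integrable (PiP (I \<union> set l)) (\<lambda>w. s (map w (sorted_list_of_set T @ l)))"
    by (rule square_integrable_kernel) (use l assms fT in auto)
  then have "square_integrable (PiP I)
      (\<lambda>\<omega>. (\<integral>z. s (map (merge I (set l) (\<omega>, z)) (sorted_list_of_set T @ l)) \<partial>PiP (set l)) - theta)"
    by (intro square_integrable_diff square_integrable_integral_merge
          square_integrable_const finite_measure_PiP) (use assms l in auto)
  moreover have "(\<integral>z. s (map (merge I (set l) (\<omega>, z)) (sorted_list_of_set T @ l)) \<partial>PiP (set l))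
      - theta = hsc_on T \<omega>" if "\<omega> \<in> space (PiP I)" for \<omega>
    by (rule hsc_on_eq_integral_merge[symmetric]) (use assms l that in auto)
  ultimately show ?thesis by (rule square_integrable_cong)
qed

lemma square_integrable_hterm_on:
  assumes "finite I" "T \<subseteq> I" "card T \<le> k"
  shows "square_integrable (PiP I) (hterm_on T)"
  using assms(2,3)
proof (induction "card T" arbitrary: T rule: less_induct)
  case less
  have fT: "finite T" using less.prems assms(1) finite_subset by blast
  have "square_integrable (PiP I)
      (\<lambda>\<omega>. hsc_on T \<omega> - (\<Sum>A | A \<subseteq> T \<and> A \<noteq> {} \<and> A \<noteq> T. hterm_on A \<omega>))"
  proof (intro square_integrable_diff square_integrable_sum finite_measure_PiP assms(1))
    show "square_integrable (PiP I) (hsc_on T)"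
      using square_integrable_hsc_on[OF assms(1) less.prems] .
    fix A assume A: "A \<in> {A. A \<subseteq> T \<and> A \<noteq> {} \<and> A \<noteq> T}"
    then have "card A < card T" using fT by (auto intro: psubset_card_mono)
    then show "square_integrable (PiP I) (hterm_on A)" using less A by auto
  qed
  then show ?case by (rule square_integrable_cong) (simp add: hterm_on_rec[OF fT])
qed

lemma integral_hsc_on_mult:
  assumes I: "finite I" "I \<inter> E = {}" "finite E" and U: "U \<subseteq> I"
    and l: "distinct l" "set l \<subseteq> E" "card U + length l = k"
    and g: "square_integrable (PiP I) g"
  shows "(\<integral>\<omega>. hsc_on U \<omega> * g \<omega> \<partial>PiP I) =
    (\<integral>w. s (map w (sorted_list_of_set U @ l)) * g (restrict w I) \<partial>PiP (I \<union> E))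
      - theta * (\<integral>\<omega>. g \<omega> \<partial>PiP I)"
proof -
  define S where "S = (\<lambda>w. s (map w (sorted_list_of_set U @ l)))"
  define cond where "cond = (\<lambda>\<omega>. \<integral>z. S (merge I E (\<omega>, z)) \<partial>PiP E)"
  have fU: "finite U" using I U finite_subset by blast
  have S: "square_integrable (PiP (I \<union> E)) S"
    unfolding S_def by (rule square_integrable_kernel) (use I U l fU in auto)
  have cond: "square_integrable (PiP I) cond"
    unfolding cond_def by (rule square_integrable_integral_merge[OF I(1,3,2) S])
  have "(\<integral>\<omega>. hsc_on U \<omega> * g \<omega> \<partial>PiP I) = (\<integral>\<omega>. cond \<omega> * g \<omega> - theta * g \<omega> \<partial>PiP I)"
    by (rule Bochner_Integration.integral_cong[OF refl])
       (simp add: hsc_on_eq_integral_merge[OF I(1,2) U l] cond_def S_def left_diff_distrib)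
  also have "\<dots> = (\<integral>\<omega>. cond \<omega> * g \<omega> \<partial>PiP I) - theta * (\<integral>\<omega>. g \<omega> \<partial>PiP I)"
    using square_integrable_mult[OF cond g]
      square_integrable_integrable[OF finite_measure_PiP[OF I(1)] g] by simp
  also have "(\<integral>\<omega>. cond \<omega> * g \<omega> \<partial>PiP I) = (\<integral>w. S w * g (restrict w I) \<partial>PiP (I \<union> E))"
    unfolding cond_def by (rule integral_integral_merge_mult[OF I(1,3,2) S g])
  finally show ?thesis unfolding S_def .
qed

lemma kernel_sorted_split:
  fixes T J :: "nat set"
  assumes "finite T" "card T + length l = k"
  shows "s (map w (sorted_list_of_set (T \<inter> J) @ sorted_list_of_set (T - J) @ l)) =
         s (map w (sorted_list_of_set T @ l))"
proof -
  have ms: "mset (sorted_list_of_set A) = mset_set A" for A :: "nat set"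
    by (metis mset_sorted_list_of_multiset sorted_list_of_mset_set)
  have "mset_set T = mset_set (T \<inter> J) + mset_set (T - J)"
    using assms(1) by (metis Int_Diff_Un Int_Diff_disjoint finite_Diff finite_Int mset_set_Union)
  then have "mset (map w (sorted_list_of_set T @ l)) =
      mset (map w (sorted_list_of_set (T \<inter> J) @ sorted_list_of_set (T - J) @ l))"
    by (simp add: ms)
  moreover have "length (map w (sorted_list_of_set T @ l)) = k" using assms by simp
  ultimately show ?thesis by (metis symmetric)
qed

text \<open>In probabilistic terms: \<open>E[s\<^bsub>|T|\<^esub>(X\<^sub>T) | X\<^sub>J] = s\<^bsub>|T \<inter> J|\<^esub>(X\<^bsub>T \<inter> J\<^esub>)\<close>. The symmetry of \<open>s\<close>
  lets the coordinates \<open>T - J\<close> join the integrated-out arguments.\<close>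

lemma integral_hsc_on_mult_restrict:
  assumes I: "finite I" "J \<subseteq> I" and T: "T \<subseteq> I" "card T \<le> k"
    and g: "square_integrable (PiP J) g"
  shows "(\<integral>\<omega>. hsc_on T \<omega> * g (restrict \<omega> J) \<partial>PiP I) =
         (\<integral>\<omega>. hsc_on (T \<inter> J) \<omega> * g (restrict \<omega> J) \<partial>PiP I)"
proof -
  obtain l where l: "distinct l" "set l \<inter> I = {}" "length l = k - card T"
    using fresh_list[OF I(1)] by blast
  define E where "E = set l"
  define l' where "l' = sorted_list_of_set (T - J) @ l"
  define S where "S = (\<lambda>w. s (map w (sorted_list_of_set T @ l)))"
  have fT: "finite T" and fJ: "finite J" using I T finite_subset by blast+
  have card_T: "card T = card (T \<inter> J) + card (T - J)" using card_Int_Diff[OF fT] .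
  have l': "distinct l'" "set l' \<subseteq> (I - J) \<union> E" "card (T \<inter> J) + length l' = k"
    using l T card_T fT by (auto simp: l'_def E_def)
  have perm: "s (map w (sorted_list_of_set (T \<inter> J) @ l')) = S w" for w
    unfolding l'_def S_def by (rule kernel_sorted_split[OF fT]) (use l T fT in simp)
  have gI: "square_integrable (PiP I) (\<lambda>\<omega>. g (restrict \<omega> J))"
    by (rule square_integrable_restrict_PiP[OF I(2,1) g])
  have gm: "g \<in> borel_measurable (PiP J)" using g by (simp add: square_integrable_def)
  have "(\<integral>\<omega>. hsc_on T \<omega> * g (restrict \<omega> J) \<partial>PiP I) =
      (\<integral>w. S w * g (restrict (restrict w I) J) \<partial>PiP (I \<union> E)) - theta * (\<integral>\<omega>. g (restrict \<omega> J) \<partial>PiP I)"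
    unfolding S_def by (rule integral_hsc_on_mult[OF I(1) _ _ T(1) l(1) _ _ gI])
      (use l T fT in \<open>auto simp: E_def\<close>)
  also have "\<dots> = (\<integral>w. S w * g (restrict w J) \<partial>PiP (J \<union> ((I - J) \<union> E))) - theta * (\<integral>\<omega>. g \<omega> \<partial>PiP J)"
  proof -
    have "J \<union> ((I - J) \<union> E) = I \<union> E" using I by auto
    then show ?thesis using I by (simp add: Int_absorb1 integral_restrict_PiP[OF I(2,1) gm])
  qed
  also have "\<dots> = (\<integral>\<omega>. hsc_on (T \<inter> J) \<omega> * g \<omega> \<partial>PiP J)"
    unfolding perm[symmetric]
    by (rule integral_hsc_on_mult[symmetric, OF fJ _ _ _ l' g]) (use I l in \<open>auto simp: E_def\<close>)
  also have "\<dots> = (\<integral>\<omega>. hsc_on (T \<inter> J) \<omega> * g (restrict \<omega> J) \<partial>PiP I)"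
  proof -
    have "square_integrable (PiP J) (hsc_on (T \<inter> J))"
      using T card_mono[OF fT, of "T \<inter> J"] by (intro square_integrable_hsc_on fJ) auto
    then have "(\<lambda>\<omega>. hsc_on (T \<inter> J) \<omega> * g \<omega>) \<in> borel_measurable (PiP J)"
      using gm by (intro borel_measurable_times) (auto simp: square_integrable_def)
    from integral_restrict_PiP[OF I(2,1) this] show ?thesis
      using fT by (simp add: hsc_on_restrict)
  qed
  finally show ?thesis .
qed

lemma integral_hterm_on_mult_restrict:
  assumes I: "finite I" "J \<subseteq> I" and T: "T \<subseteq> I" "card T \<le> k" "\<not> T \<subseteq> J"
    and g: "square_integrable (PiP J) g"
  shows "(\<integral>\<omega>. hterm_on T \<omega> * g (restrict \<omega> J) \<partial>PiP I) = 0"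
  using T
proof (induction "card T" arbitrary: T rule: less_induct)
  case less
  let ?g = "\<lambda>\<omega>. g (restrict \<omega> J)"
  define outside where "outside = {A. A \<subseteq> T \<and> A \<noteq> T \<and> \<not> A \<subseteq> J}"
  define inside where "inside = {A. A \<subseteq> T \<inter> J \<and> A \<noteq> {}}"
  have fT: "finite T" using less.prems I finite_subset by blast
  have fin: "finite outside" "finite inside" using fT by (auto simp: outside_def inside_def)
  have split: "{A. A \<subseteq> T \<and> A \<noteq> {} \<and> A \<noteq> T} = outside \<union> inside" "outside \<inter> inside = {}"
    using less.prems by (auto simp: outside_def inside_def)
  have hterm_T: "hterm_on T \<omega> = hsc_on T \<omega> - hsc_on (T \<inter> J) \<omega> - (\<Sum>A\<in>outside. hterm_on A \<omega>)"
    for \<omega>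
    using hterm_on_rec[OF fT, of \<omega>] hsc_on_eq_sum_hterm_on[of "T \<inter> J" \<omega>] fT
    unfolding split(1) sum.union_disjoint[OF fin split(2)] by (simp add: inside_def)
  have outside: "A \<subseteq> I" "card A \<le> k" "card A < card T" "\<not> A \<subseteq> J" if "A \<in> outside" for A
    using that less.prems fT by (auto simp: outside_def intro: psubset_card_mono card_mono order.trans)
  have sq_g: "square_integrable (PiP I) ?g"
    by (rule square_integrable_restrict_PiP[OF I(2,1) g])
  have sq_T: "square_integrable (PiP I) (hsc_on T)" "square_integrable (PiP I) (hsc_on (T \<inter> J))"
    using less.prems card_mono[OF fT, of "T \<inter> J"] by (auto intro!: square_integrable_hsc_on I(1))
  have sq_A: "square_integrable (PiP I) (hterm_on A)" if "A \<in> outside" for A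
    using square_integrable_hterm_on[OF I(1) outside(1,2)[OF that]] .
  have "(\<integral>\<omega>. hterm_on T \<omega> * ?g \<omega> \<partial>PiP I) =
      (\<integral>\<omega>. hsc_on T \<omega> * ?g \<omega> - hsc_on (T \<inter> J) \<omega> * ?g \<omega> - (\<Sum>A\<in>outside. hterm_on A \<omega> * ?g \<omega>) \<partial>PiP I)"
    by (simp add: hterm_T left_diff_distrib sum_distrib_right)
  also have "\<dots> = (\<integral>\<omega>. hsc_on T \<omega> * ?g \<omega> \<partial>PiP I) - (\<integral>\<omega>. hsc_on (T \<inter> J) \<omega> * ?g \<omega> \<partial>PiP I)
      - (\<Sum>A\<in>outside. \<integral>\<omega>. hterm_on A \<omega> * ?g \<omega> \<partial>PiP I)"
    using square_integrable_mult[OF sq_T(1) sq_g] square_integrable_mult[OF sq_T(2) sq_g]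
      square_integrable_mult[OF sq_A sq_g]
    by (simp add: Bochner_Integration.integral_diff Bochner_Integration.integral_sum)
  also have "(\<Sum>A\<in>outside. \<integral>\<omega>. hterm_on A \<omega> * ?g \<omega> \<partial>PiP I) = 0"
    using less.hyps outside by (intro sum.neutral) auto
  finally show ?case
    using integral_hsc_on_mult_restrict[OF I less.prems(1,2) g] by linarith
qed

lemma integral_hterm_on_orthogonal:
  assumes I: "finite I" and T: "T \<subseteq> I" "card T \<le> k" and T': "T' \<subseteq> I" "card T' \<le> k"
    and "T \<noteq> T'"
  shows "(\<integral>\<omega>. hterm_on T \<omega> * hterm_on T' \<omega> \<partial>PiP I) = 0"
proof -
  have one_sided: "(\<integral>\<omega>. hterm_on A \<omega> * hterm_on B \<omega> \<partial>PiP I) = 0"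
    if A: "A \<subseteq> I" "card A \<le> k" and B: "B \<subseteq> I" "card B \<le> k" and i: "i \<in> A" "i \<notin> B" for A B i
  proof -
    let ?J = "I - {i}"
    have fB: "finite B" using I B finite_subset by blast
    have B_J: "B \<subseteq> ?J" using B i by auto
    have "square_integrable (PiP ?J) (hterm_on B)"
      using B_J B I by (intro square_integrable_hterm_on) auto
    moreover have "\<not> A \<subseteq> ?J" using i by auto
    ultimately have "(\<integral>\<omega>. hterm_on A \<omega> * hterm_on B (restrict \<omega> ?J) \<partial>PiP I) = 0"
      using integral_hterm_on_mult_restrict[OF I Diff_subset A] by blast
    then show ?thesis by (simp add: hterm_on_restrict[OF B_J fB])
  qed
  from \<open>T \<noteq> T'\<close> obtain i where "i \<in> T \<and> i \<notin> T' \<or> i \<in> T' \<and> i \<notin> T" by blast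
  then show ?thesis
    using one_sided[OF T T'] one_sided[OF T' T] by (auto simp: mult.commute)
qed

lemma integral_hterm_on:
  assumes "finite I" "T \<subseteq> I" "card T \<le> k" "T \<noteq> {}"
  shows "(\<integral>\<omega>. hterm_on T \<omega> \<partial>PiP I) = 0"
  using integral_hterm_on_mult_restrict[OF assms(1) empty_subsetI assms(2,3), of "\<lambda>_. 1"]
    square_integrable_const[OF finite_measure_PiP[of "{}"]] assms(4) by simp

lemma integral_hterm_on_square:
  assumes I: "finite I" and T: "T \<subseteq> I" "card T \<le> k" "T \<noteq> {}"
  shows "(\<integral>\<omega>. (hterm_on T \<omega>)\<^sup>2 \<partial>PiP I) = hvar s P k (card T)"
proof -
  define j where "j = card T"
  define L where "L = sorted_list_of_set T"
  have fT: "finite T" using I T finite_subset by blast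
  have L: "length L = j" "distinct L" "set L \<subseteq> I" using fT T by (auto simp: L_def j_def)
  have sorted: "sorted_list_of_set {..<j} = [0..<j]"
    by (metis atLeast0LessThan sorted_list_of_set_range)
  have H_j: "hterm s P k (map y [0..<j]) = hterm_on {..<j} y" for y
    by (simp add: hterm_on_def sorted)
  have sq_j: "square_integrable (PiP {..<j}) (hterm_on {..<j})"
    by (rule square_integrable_hterm_on) (use T in \<open>auto simp: j_def\<close>)
  have mean: "(\<integral>y. hterm_on {..<j} y \<partial>PiP {..<j}) = 0"
  proof (rule integral_hterm_on)
    have "0 < j" using fT T by (simp add: j_def card_gt_0_iff)
    then show "{..<j} \<noteq> {}" by auto
  qed (use T in \<open>auto simp: j_def\<close>)
  have "hvar s P k j = (\<integral>y. (hterm_on {..<j} y)\<^sup>2 \<partial>PiP {..<j})"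
    unfolding hvar_def H_j mean by simp
  also have "\<dots> = (\<integral>\<omega>. (hterm_on {..<j} (reindex L \<omega>))\<^sup>2 \<partial>PiP I)"
  proof -
    have "(\<lambda>y. (hterm_on {..<j} y)\<^sup>2) \<in> borel_measurable (PiP {..<length L})"
      using sq_j L(1) by (auto simp: square_integrable_def)
    from integral_reindex[OF L(2,3) this] show ?thesis using L(1) by simp
  qed
  also have "\<dots> = (\<integral>\<omega>. (hterm_on T \<omega>)\<^sup>2 \<partial>PiP I)"
    using map_reindex[of L] L(1) by (simp add: hterm_on_def sorted L_def)
  finally show ?thesis by (simp add: j_def)
qed

lemma integral_square_sum_hterm_on:
  assumes I: "finite I" and TT: "finite TT" "\<And>T. T \<in> TT \<Longrightarrow> T \<subseteq> I \<and> T \<noteq> {} \<and> card T \<le> k"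
  shows "(\<integral>\<omega>. (\<Sum>T\<in>TT. c T * hterm_on T \<omega>)\<^sup>2 \<partial>PiP I) = (\<Sum>T\<in>TT. (c T)\<^sup>2 * hvar s P k (card T))"
proof -
  have int: "integrable (PiP I) (\<lambda>\<omega>. c T * c T' * (hterm_on T \<omega> * hterm_on T' \<omega>))"
    if "T \<in> TT" "T' \<in> TT" for T T'
    using square_integrable_mult[OF square_integrable_hterm_on square_integrable_hterm_on]
      I TT(2)[OF that(1)] TT(2)[OF that(2)] by simp
  have "(\<integral>\<omega>. (\<Sum>T\<in>TT. c T * hterm_on T \<omega>)\<^sup>2 \<partial>PiP I) =
      (\<integral>\<omega>. (\<Sum>T\<in>TT. \<Sum>T'\<in>TT. c T * c T' * (hterm_on T \<omega> * hterm_on T' \<omega>)) \<partial>PiP I)"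
    by (simp add: power2_eq_square sum_product algebra_simps)
  also have "\<dots> = (\<Sum>T\<in>TT. \<Sum>T'\<in>TT. c T * c T' * (\<integral>\<omega>. hterm_on T \<omega> * hterm_on T' \<omega> \<partial>PiP I))"
    using int by (simp add: Bochner_Integration.integral_sum)
  also have "\<dots> = (\<Sum>T\<in>TT. c T * c T * (\<integral>\<omega>. hterm_on T \<omega> * hterm_on T \<omega> \<partial>PiP I))"
  proof (rule sum.cong[OF refl])
    fix T assume T: "T \<in> TT"
    have "(\<Sum>T'\<in>TT - {T}. c T * c T' * (\<integral>\<omega>. hterm_on T \<omega> * hterm_on T' \<omega> \<partial>PiP I)) = 0"
      using integral_hterm_on_orthogonal[OF I] TT(2) T by (intro sum.neutral) auto
    then show "(\<Sum>T'\<in>TT. c T * c T' * (\<integral>\<omega>. hterm_on T \<omega> * hterm_on T' \<omega> \<partial>PiP I)) =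
        c T * c T * (\<integral>\<omega>. hterm_on T \<omega> * hterm_on T \<omega> \<partial>PiP I)"
      using T TT(1) by (simp add: sum.remove)
  qed
  also have "\<dots> = (\<Sum>T\<in>TT. (c T)\<^sup>2 * hvar s P k (card T))"
    using integral_hterm_on_square[OF I] TT(2) by (simp add: power2_eq_square)
  finally show ?thesis .
qed

end

section \<open>Counting \<open>k\<close>-subsets\<close>

lemma card_supersets:
  fixes N U :: "'a set"
  assumes N: "finite N" and U: "U \<subseteq> N" "card U \<le> k"
  shows "card {S. S \<subseteq> N \<and> card S = k \<and> U \<subseteq> S} = (card N - card U) choose (k - card U)"
proof -
  have fU: "finite U" using N U finite_subset by blast
  have "bij_betw (\<lambda>S. S - U) {S. S \<subseteq> N \<and> card S = k \<and> U \<subseteq> S}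
      {B. B \<subseteq> N - U \<and> card B = k - card U}"
  proof (rule bij_betw_byWitness[where f'="\<lambda>B. B \<union> U"])
    show "(\<lambda>B. B \<union> U) ` {B. B \<subseteq> N - U \<and> card B = k - card U}
        \<subseteq> {S. S \<subseteq> N \<and> card S = k \<and> U \<subseteq> S}"
    proof safe
      fix B assume B: "B \<subseteq> N - U" "card B = k - card U"
      have "finite B" using B N finite_subset by blast
      then have "card (B \<union> U) = card B + card U" using B fU by (intro card_Un_disjoint) auto
      then show "card (B \<union> U) = k" using B U by simp
    qed (use U in auto)
  qed (use fU in \<open>auto simp: card_Diff_subset\<close>)
  then have "card {S. S \<subseteq> N \<and> card S = k \<and> U \<subseteq> S} = card {B. B \<subseteq> N - U \<and> card B = k - card U}"
    by (rule bij_betw_same_card)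
  also have "\<dots> = card (N - U) choose (k - card U)" using N by (intro n_subsets) simp
  finally show ?thesis using fU U by (simp add: card_Diff_subset)
qed

text \<open>The \<open>k\<close>-subsets containing \<open>U\<close> and a fixed \<open>j \<notin> U\<close> are the fraction
  \<open>(k - |U|) / (|N| - |U|)\<close> of all \<open>k\<close>-subsets containing \<open>U\<close>; stated without division.\<close>

lemma card_supersets_insert:
  fixes N U :: "'a set"
  assumes N: "finite N" and U: "U \<subseteq> N" "card U \<le> k" and j: "j \<in> N - U"
  shows "(card N - card U) * card {S. S \<subseteq> N \<and> card S = k \<and> insert j U \<subseteq> S} =
         (k - card U) * ((card N - card U) choose (k - card U))"
proof (cases "card U < k")
  case True
  have "card (insert j U) = Suc (card U)"
    using j N U finite_subset by fastforce
  then have "card {S. S \<subseteq> N \<and> card S = k \<and> insert j U \<subseteq> S} =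
      (card N - card U - 1) choose (k - card U - 1)"
    using card_supersets[OF N, of "insert j U"] U j True by simp
  then show ?thesis
    using times_binomial_minus1_eq[of "k - card U" "card N - card U"] True by simp
next
  case False
  have card_jU: "card (insert j U) = Suc k"
    using j N U False finite_subset by fastforce
  have "card S \<noteq> k" if "S \<subseteq> N" "insert j U \<subseteq> S" for S
    using card_mono[OF finite_subset[OF that(1) N] that(2)] card_jU by simp
  then have "{S. S \<subseteq> N \<and> card S = k \<and> insert j U \<subseteq> S} = {}" by blast
  moreover have "k - card U = 0" using False by simp
  ultimately show ?thesis by (simp only: card.empty mult_0 mult_0_right)
qed

lemma sum_nonempty_subsets_swap:
  fixes h :: "'a set \<Rightarrow> real" and N :: "'a set"
  assumes N: "finite N" and SS: "SS \<subseteq> {S. S \<subseteq> N \<and> card S = k}"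
  shows "(\<Sum>S\<in>SS. \<Sum>A | A \<subseteq> S \<and> A \<noteq> {}. h A) =
         (\<Sum>T | T \<subseteq> N \<and> T \<noteq> {} \<and> card T \<le> k. real (card {S\<in>SS. T \<subseteq> S}) * h T)"
proof -
  let ?TT = "{T. T \<subseteq> N \<and> T \<noteq> {} \<and> card T \<le> k}"
  have fTT: "finite ?TT" by (rule finite_subset[of _ "Pow N"]) (use N in auto)
  have fSS: "finite SS" by (rule finite_subset[of _ "Pow N"]) (use N SS in auto)
  have "(\<Sum>A | A \<subseteq> S \<and> A \<noteq> {}. h A) = (\<Sum>T\<in>?TT. if T \<subseteq> S then h T else 0)"
    if S: "S \<in> SS" for S
  proof -
    have S': "S \<subseteq> N" "card S = k" using S SS by auto
    then have "finite S" using N finite_subset by blast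
    with S' have "{A. A \<subseteq> S \<and> A \<noteq> {}} = {T\<in>?TT. T \<subseteq> S}" by (auto dest: card_mono)
    then show ?thesis using sum.inter_filter[OF fTT, of h "\<lambda>T. T \<subseteq> S"] by simp
  qed
  then have "(\<Sum>S\<in>SS. \<Sum>A | A \<subseteq> S \<and> A \<noteq> {}. h A) =
      (\<Sum>S\<in>SS. \<Sum>T\<in>?TT. if T \<subseteq> S then h T else 0)"
    by (rule sum.cong[OF refl])
  also have "\<dots> = (\<Sum>T\<in>?TT. \<Sum>S\<in>SS. if T \<subseteq> S then h T else 0)" by (rule sum.swap)
  also have "\<dots> = (\<Sum>T\<in>?TT. real (card {S\<in>SS. T \<subseteq> S}) * h T)"
    using sum.inter_filter[OF fSS, of "\<lambda>_. h _"] by (intro sum.cong refl) simp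
  finally show ?thesis .
qed

lemma sum_nonempty_subsets_by_card:
  fixes f :: "nat \<Rightarrow> real" and N :: "'a set"
  assumes N: "finite N"
  shows "(\<Sum>T | T \<subseteq> N \<and> T \<noteq> {} \<and> card T \<le> k. f (card T)) =
         (\<Sum>t=1..k. real (card N choose t) * f t)"
proof -
  let ?TT = "{T. T \<subseteq> N \<and> T \<noteq> {} \<and> card T \<le> k}"
  have fTT: "finite ?TT" by (rule finite_subset[of _ "Pow N"]) (use N in auto)
  have "card ` ?TT \<subseteq> {1..k}"
    using N finite_subset by (fastforce simp: Suc_le_eq card_gt_0_iff)
  then have "(\<Sum>T\<in>?TT. f (card T)) = (\<Sum>t=1..k. \<Sum>T | T \<in> ?TT \<and> card T = t. f (card T))"
    by (rule sum.group[OF fTT finite_atLeastAtMost, symmetric])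
  also have "\<dots> = (\<Sum>t=1..k. real (card N choose t) * f t)"
  proof (rule sum.cong[OF refl])
    fix t :: nat assume t: "t \<in> {1..k}"
    then have "{T. T \<in> ?TT \<and> card T = t} = {T. T \<subseteq> N \<and> card T = t}" by auto
    then show "(\<Sum>T | T \<in> ?TT \<and> card T = t. f (card T)) = real (card N choose t) * f t"
      using n_subsets[OF N, of t] by simp
  qed
  finally show ?thesis by simp
qed

lemma psIJ_coeff_square_sum_algebra:
  fixes n k t C0 C1 D :: real
  assumes "0 < k" "k < n" "t < n" "0 < C0" "k * C0 = n * C1"
  shows "t * (D / C1 - D / C0)\<^sup>2 + (n - t) * ((k - t) * D / ((n - t) * C1) - D / C0)\<^sup>2 =
         (D * (n - k) / (k * C0))\<^sup>2 * (t * n / (n - t))"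
proof -
  define a where "a = D * (n - k) / (k * C0)"
  define r where "r = t / (n - t)"
  have C1: "C1 = k * C0 / n" using assms by (simp add: field_simps)
  have "D / C1 - D / C0 = a"
    using assms unfolding C1 a_def by (simp add: field_simps)
  moreover have "(k - t) * D / ((n - t) * C1) - D / C0 = - (a * r)"
    using assms unfolding C1 a_def r_def by (simp add: field_simps)
  ultimately have "t * (D / C1 - D / C0)\<^sup>2 + (n - t) * ((k - t) * D / ((n - t) * C1) - D / C0)\<^sup>2 =
      t * a\<^sup>2 + (n - t) * (- (a * r))\<^sup>2"
    by (simp only:)
  also have "\<dots> = a\<^sup>2 * (t + (n - t) * r\<^sup>2)"
    by (simp add: power_mult_distrib algebra_simps)
  also have "(n - t) * r\<^sup>2 = t * r"
    using assms by (simp add: r_def power2_eq_square)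
  also have "t + t * r = t * n / (n - t)"
    using assms by (simp add: r_def field_simps)
  finally show ?thesis by (simp add: a_def)
qed

definition psIJ_weight :: "nat \<Rightarrow> nat \<Rightarrow> nat \<Rightarrow> real" where
  "psIJ_weight n k t = (real ((n - t) choose (k - t)) * (real n - real k) / (real k * real (n choose k)))\<^sup>2
      * (real t * real n / (real n - real t))"

lemma psIJ_weight_binomial:
  fixes n k t :: nat
  assumes t: "1 \<le> t" "t \<le> k" and kn: "k < n"
  shows "real k ^ 2 / real n ^ 2 * real (n choose t) * psIJ_weight n k t
    = (real (n - k) / real n)\<^sup>2 * (real t / (1 - real t / real n))
        * real (k choose t) ^ 2 / real (n choose t)"
proof -
  define B C0 Ck where "B = real (n choose t)" and "C0 = real (n choose k)" and "Ck = real (k choose t)"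
  have pos: "0 < B" "0 < C0" "0 < real k" "real t < real n"
    using t kn by (auto simp: B_def C0_def)
  have D: "real ((n - t) choose (k - t)) = C0 * Ck / B"
    using arg_cong[OF choose_mult[of t k n], of real] t kn pos(1)
    by (simp add: B_def C0_def Ck_def field_simps)
  define a where "a = real ((n - t) choose (k - t)) * (real n - real k) / (real k * C0)"
  have a: "a = Ck * (real n - real k) / (B * real k)"
    unfolding a_def D using pos by (simp add: field_simps)
  have "real k ^ 2 / real n ^ 2 * B * (a\<^sup>2 * (real t * real n / (real n - real t)))
      = ((real n - real k) / real n)\<^sup>2 * (real t * real n / (real n - real t)) * Ck\<^sup>2 / B"
    unfolding a using pos by (simp add: field_simps power2_eq_square)
  moreover have "real t * real n / (real n - real t) = real t / (1 - real t / real n)"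
    using pos by (simp add: field_simps)
  ultimately show ?thesis
    using kn unfolding psIJ_weight_def B_def[symmetric] C0_def[symmetric] Ck_def[symmetric]
      a_def[symmetric]
    by (simp add: of_nat_diff)
qed

text \<open>The coefficient of \<open>H\<^sub>T\<close> in \<open>e\<^sub>j - s\<^sub>0\<close>.\<close>

definition psIJ_coeff :: "nat \<Rightarrow> nat \<Rightarrow> nat \<Rightarrow> nat set \<Rightarrow> real" where
  "psIJ_coeff n k j T =
     real (card {S. S \<subseteq> {1..n} \<and> card S = k \<and> insert j T \<subseteq> S}) / real ((n - 1) choose (k - 1))
     - real (card {S. S \<subseteq> {1..n} \<and> card S = k \<and> T \<subseteq> S}) / real (n choose k)"

lemma sum_psIJ_coeff_square:
  assumes k: "1 \<le> k" "k < n" and T: "T \<subseteq> {1..n}" "card T \<le> k"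
  shows "(\<Sum>j=1..n. (psIJ_coeff n k j T)\<^sup>2) = psIJ_weight n k (card T)"
proof -
  define t where "t = card T"
  define C0 C1 D where "C0 = real (n choose k)" and "C1 = real ((n - 1) choose (k - 1))"
    and "D = real ((n - t) choose (k - t))"
  have fT: "finite T" using T finite_subset by blast
  have card_T: "card {S. S \<subseteq> {1..n} \<and> card S = k \<and> T \<subseteq> S} = (n - t) choose (k - t)"
    using card_supersets[of "{1..n}" T k] T by (simp add: t_def)
  have in_T: "psIJ_coeff n k j T = D / C1 - D / C0" if "j \<in> T" for j
    using that card_T by (simp add: psIJ_coeff_def insert_absorb C0_def C1_def D_def)
  have out_T: "psIJ_coeff n k j T = (real k - real t) * D / ((real n - real t) * C1) - D / C0"
    if "j \<in> {1..n} - T" for j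
  proof -
    have "real (n - t) * card {S. S \<subseteq> {1..n} \<and> card S = k \<and> insert j T \<subseteq> S} = real (k - t) * D"
      using arg_cong[OF card_supersets_insert[of "{1..n}" T k j], of real] T that
      by (simp add: t_def D_def)
    moreover have "t < n" using T k by (simp add: t_def)
    ultimately have "card {S. S \<subseteq> {1..n} \<and> card S = k \<and> insert j T \<subseteq> S}
        = (real k - real t) * D / (real n - real t)"
      using T by (simp add: of_nat_diff t_def field_simps)
    then show ?thesis
      using card_T by (simp add: psIJ_coeff_def C0_def C1_def D_def t_def)
  qed
  have "(\<Sum>j=1..n. (psIJ_coeff n k j T)\<^sup>2) =
      (\<Sum>j\<in>T. (psIJ_coeff n k j T)\<^sup>2) + (\<Sum>j\<in>{1..n} - T. (psIJ_coeff n k j T)\<^sup>2)"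
    using sum.subset_diff[OF T(1)] by (simp add: add.commute)
  also have "\<dots> = real t * (D / C1 - D / C0)\<^sup>2
      + (real n - real t) * ((real k - real t) * D / ((real n - real t) * C1) - D / C0)\<^sup>2"
    using T fT k card_mono[OF _ T(1)] by (simp add: in_T out_T card_Diff_subset t_def of_nat_diff)
  also have "\<dots> = (D * (real n - real k) / (real k * C0))\<^sup>2 * (real t * real n / (real n - real t))"
  proof (rule psIJ_coeff_square_sum_algebra)
    show "real k * C0 = real n * C1"
      using arg_cong[OF times_binomial_minus1_eq[of k n], of real] k by (simp add: C0_def C1_def)
  qed (use k T in \<open>auto simp: C0_def t_def\<close>)
  finally show ?thesis by (simp add: psIJ_weight_def D_def C0_def t_def)
qed

section \<open>The expectation of ps-IJ\<open>\<^sub>U\<close>\<close>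

lemma (in prob_space) distr_restrict_iid:
  assumes "finite I" "I \<noteq> {}" "indep_vars (\<lambda>_. N) X I" "\<And>i. i \<in> I \<Longrightarrow> distr M N (X i) = N"
  shows "distr M (PiM I (\<lambda>_. N)) (\<lambda>\<omega>. \<lambda>i\<in>I. X i \<omega>) = PiM I (\<lambda>_. N)"
proof -
  have "X i \<in> measurable M N" if "i \<in> I" for i
    using assms(3) that unfolding indep_vars_def by blast
  from indep_vars_iff_distr_eq_PiM'[where M' = "\<lambda>_. N" and X = X, OF assms(2) this] assms(3)
  have "distr M (PiM I (\<lambda>_. N)) (\<lambda>\<omega>. \<lambda>i\<in>I. X i \<omega>) = PiM I (\<lambda>i. distr M N (X i))"
    by blast
  also have "\<dots> = PiM I (\<lambda>_. N)" using assms(4) by (intro PiM_cong) auto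
  finally show ?thesis .
qed

lemma psIJ_U_restrict:
  "psIJ_U s X n k \<omega> = psIJ_U s (\<lambda>i \<omega>. \<omega> i) n k (\<lambda>i\<in>{1..n}. X i \<omega>)"
proof -
  have "kernel_at s X S \<omega> = kernel_at s (\<lambda>i \<omega>. \<omega> i) S (\<lambda>i\<in>{1..n}. X i \<omega>)" if "S \<subseteq> {1..n}" for S
    using that finite_subset[OF that] unfolding kernel_at_def by (intro arg_cong[where f=s]) auto
  then show ?thesis
    unfolding psIJ_U_def e_stat_def s0_stat_def by (intro arg_cong2[where f="(*)"] sum.cong) auto
qed

context symmetric_kernel
begin

lemma sum_kernel_at:
  assumes "SS \<subseteq> {S. S \<subseteq> {1..n} \<and> card S = k}"
  shows "(\<Sum>S\<in>SS. kernel_at s (\<lambda>i \<omega>. \<omega> i) S \<omega>) = real (card SS) * theta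
    + (\<Sum>T | T \<subseteq> {1..n} \<and> T \<noteq> {} \<and> card T \<le> k. real (card {S\<in>SS. T \<subseteq> S}) * hterm_on T \<omega>)"
proof -
  have "(\<Sum>S\<in>SS. kernel_at s (\<lambda>i \<omega>. \<omega> i) S \<omega>) =
      (\<Sum>S\<in>SS. theta + (\<Sum>A | A \<subseteq> S \<and> A \<noteq> {}. hterm_on A \<omega>))"
    using assms finite_subset[of _ "{1..n}"] by (intro sum.cong refl kernel_at_eq_sum_hterm_on) auto
  then show ?thesis
    by (simp add: sum.distrib sum_nonempty_subsets_swap[OF finite_atLeastAtMost assms])
qed

lemma e_stat_eq_sum_hterm_on:
  assumes k: "1 \<le> k" "k < n" and j: "j \<in> {1..n}"
  shows "e_stat s (\<lambda>i \<omega>. \<omega> i) n k j \<omega> = theta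
    + (\<Sum>T | T \<subseteq> {1..n} \<and> T \<noteq> {} \<and> card T \<le> k.
        real (card {S. S \<subseteq> {1..n} \<and> card S = k \<and> insert j T \<subseteq> S})
          / real ((n - 1) choose (k - 1)) * hterm_on T \<omega>)"
proof -
  define SSj where "SSj = {S. S \<subseteq> {1..n} \<and> card S = k \<and> j \<in> S}"
  define C1 where "C1 = real ((n - 1) choose (k - 1))"
  have SSj: "SSj \<subseteq> {S. S \<subseteq> {1..n} \<and> card S = k}" by (auto simp: SSj_def)
  have "SSj = {S. S \<subseteq> {1..n} \<and> card S = k \<and> {j} \<subseteq> S}" by (auto simp: SSj_def)
  then have card_SSj: "real (card SSj) = C1"
    using card_supersets[of "{1..n}" "{j}" k] j k by (simp add: C1_def)
  have filter: "{S\<in>SSj. T \<subseteq> S} = {S. S \<subseteq> {1..n} \<and> card S = k \<and> insert j T \<subseteq> S}" for T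
    by (auto simp: SSj_def)
  have "0 < C1" using k by (simp add: C1_def)
  then show ?thesis
    unfolding e_stat_def SSj_def[symmetric] C1_def[symmetric]
      sum_kernel_at[OF SSj, unfolded filter card_SSj]
    by (simp add: distrib_left sum_distrib_left)
qed

lemma s0_stat_eq_sum_hterm_on:
  assumes k: "1 \<le> k" "k < n"
  shows "s0_stat s (\<lambda>i \<omega>. \<omega> i) n k \<omega> = theta
    + (\<Sum>T | T \<subseteq> {1..n} \<and> T \<noteq> {} \<and> card T \<le> k.
        real (card {S. S \<subseteq> {1..n} \<and> card S = k \<and> T \<subseteq> S}) / real (n choose k) * hterm_on T \<omega>)"
proof -
  define SS where "SS = {S. S \<subseteq> {1..n} \<and> card S = k}"
  define C0 where "C0 = real (n choose k)"
  have card_SS: "real (card SS) = C0"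
    using n_subsets[of "{1..n}" k] by (simp add: SS_def C0_def)
  have filter: "{S\<in>SS. T \<subseteq> S} = {S. S \<subseteq> {1..n} \<and> card S = k \<and> T \<subseteq> S}" for T
    by (auto simp: SS_def)
  have "0 < C0" using k by (simp add: C0_def)
  then show ?thesis
    unfolding s0_stat_def SS_def[symmetric] C0_def[symmetric]
      sum_kernel_at[OF subset_refl[of SS, unfolded SS_def], folded SS_def, unfolded filter card_SS]
    by (simp add: distrib_left sum_distrib_left)
qed

lemma e_stat_minus_s0_stat:
  assumes k: "1 \<le> k" "k < n" and j: "j \<in> {1..n}"
  shows "e_stat s (\<lambda>i \<omega>. \<omega> i) n k j \<omega> - s0_stat s (\<lambda>i \<omega>. \<omega> i) n k \<omega> =
    (\<Sum>T | T \<subseteq> {1..n} \<and> T \<noteq> {} \<and> card T \<le> k. psIJ_coeff n k j T * hterm_on T \<omega>)"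
  unfolding e_stat_eq_sum_hterm_on[OF assms] s0_stat_eq_sum_hterm_on[OF k]
  by (simp add: psIJ_coeff_def sum_subtractf left_diff_distrib)

lemma psIJ_U_eq_sum_hterm_on:
  assumes "1 \<le> k" "k < n"
  shows "psIJ_U s (\<lambda>i \<omega>. \<omega> i) n k \<omega> = real k ^ 2 / real n ^ 2 *
    (\<Sum>j=1..n. (\<Sum>T | T \<subseteq> {1..n} \<and> T \<noteq> {} \<and> card T \<le> k. psIJ_coeff n k j T * hterm_on T \<omega>)\<^sup>2)"
  unfolding psIJ_U_def using e_stat_minus_s0_stat[OF assms] by simp

lemma square_integrable_sum_hterm_on:
  assumes "finite I" "\<And>T. T \<in> TT \<Longrightarrow> T \<subseteq> I \<and> card T \<le> k"
  shows "square_integrable (PiP I) (\<lambda>\<omega>. \<Sum>T\<in>TT. c T * hterm_on T \<omega>)"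
  using assms
  by (intro square_integrable_sum finite_measure_PiP square_integrable_cmult square_integrable_hterm_on)
     auto

lemma measurable_psIJ_U:
  assumes "1 \<le> k" "k < n"
  shows "psIJ_U s (\<lambda>i \<omega>. \<omega> i) n k \<in> borel_measurable (PiP {1..n})"
proof -
  have "square_integrable (PiP {1..n})
      (\<lambda>\<omega>. \<Sum>T | T \<subseteq> {1..n} \<and> T \<noteq> {} \<and> card T \<le> k. psIJ_coeff n k j T * hterm_on T \<omega>)" for j
    by (rule square_integrable_sum_hterm_on) auto
  then have "(\<lambda>\<omega>. \<Sum>T | T \<subseteq> {1..n} \<and> T \<noteq> {} \<and> card T \<le> k. psIJ_coeff n k j T * hterm_on T \<omega>)
      \<in> borel_measurable (PiP {1..n})" for j
    by (simp add: square_integrable_def)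
  then show ?thesis
    unfolding psIJ_U_eq_sum_hterm_on[OF assms, abs_def]
    by (rule borel_measurable_times[OF borel_measurable_const borel_measurable_sum[OF borel_measurable_power]])
qed

lemma integral_psIJ_U_PiP:
  assumes k: "1 \<le> k" "k < n"
  shows "(\<integral>\<omega>. psIJ_U s (\<lambda>i \<omega>. \<omega> i) n k \<omega> \<partial>PiP {1..n}) =
    (\<Sum>j=1..k. ((real (n - k) / real n)\<^sup>2 * (real j / (1 - real j / real n)))
               * real (k choose j) ^ 2 / real (n choose j) * hvar s P k j)"
proof -
  let ?N = "{1..n}"
  let ?TT = "{T. T \<subseteq> ?N \<and> T \<noteq> {} \<and> card T \<le> k}"
  let ?c = "psIJ_coeff n k"
  have TT: "finite ?TT" "\<And>T. T \<in> ?TT \<Longrightarrow> T \<subseteq> ?N \<and> T \<noteq> {} \<and> card T \<le> k"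
    by (rule finite_subset[of _ "Pow ?N"]) auto
  have sq: "square_integrable (PiP ?N) (\<lambda>\<omega>. \<Sum>T\<in>?TT. ?c j T * hterm_on T \<omega>)" for j
    by (rule square_integrable_sum_hterm_on) auto
  have "(\<integral>\<omega>. psIJ_U s (\<lambda>i \<omega>. \<omega> i) n k \<omega> \<partial>PiP ?N) =
      real k ^ 2 / real n ^ 2 * (\<Sum>j\<in>?N. \<integral>\<omega>. (\<Sum>T\<in>?TT. ?c j T * hterm_on T \<omega>)\<^sup>2 \<partial>PiP ?N)"
    using sq by (simp add: psIJ_U_eq_sum_hterm_on[OF k] square_integrable_def)
  also have "\<dots> = real k ^ 2 / real n ^ 2 * (\<Sum>j\<in>?N. \<Sum>T\<in>?TT. (?c j T)\<^sup>2 * hvar s P k (card T))"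
    using integral_square_sum_hterm_on[OF _ TT] by simp
  also have "\<dots> = real k ^ 2 / real n ^ 2 * (\<Sum>T\<in>?TT. hvar s P k (card T) * psIJ_weight n k (card T))"
  proof -
    have "(\<Sum>j\<in>?N. \<Sum>T\<in>?TT. (?c j T)\<^sup>2 * hvar s P k (card T)) =
        (\<Sum>T\<in>?TT. \<Sum>j\<in>?N. (?c j T)\<^sup>2 * hvar s P k (card T))"
      by (rule sum.swap)
    also have "\<dots> = (\<Sum>T\<in>?TT. hvar s P k (card T) * psIJ_weight n k (card T))"
    proof (rule sum.cong[OF refl])
      fix T assume T: "T \<in> ?TT"
      have "(\<Sum>j\<in>?N. (?c j T)\<^sup>2 * hvar s P k (card T)) = (\<Sum>j\<in>?N. (?c j T)\<^sup>2) * hvar s P k (card T)"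
        by (simp add: sum_distrib_right)
      then show "(\<Sum>j\<in>?N. (?c j T)\<^sup>2 * hvar s P k (card T)) = hvar s P k (card T) * psIJ_weight n k (card T)"
        using sum_psIJ_coeff_square[OF k] T by simp
    qed
    finally show ?thesis by simp
  qed
  also have "\<dots> = (\<Sum>t=1..k. real k ^ 2 / real n ^ 2 * real (n choose t) * psIJ_weight n k t * hvar s P k t)"
    using sum_nonempty_subsets_by_card[where N = "{1..n}" and k = k and f = "\<lambda>t. hvar s P k t * psIJ_weight n k t"]
    by (simp add: sum_distrib_left mult_ac)
  also have "\<dots> = (\<Sum>j=1..k. ((real (n - k) / real n)\<^sup>2 * (real j / (1 - real j / real n)))
               * real (k choose j) ^ 2 / real (n choose j) * hvar s P k j)"
    using psIJ_weight_binomial k by (intro sum.cong refl) simp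
  finally show ?thesis .
qed

end

theorem theorem5:
  fixes M :: "'a measure" and P :: "'b measure" and X :: "nat \<Rightarrow> 'a \<Rightarrow> 'b"
    and s :: "'b list \<Rightarrow> real" and n k :: nat
  assumes "prob_space M"
    and "prob_space P"
    and "prob_space.indep_vars M (\<lambda>_. P) X {1..n}"
    and "\<And>i. i \<in> {1..n} \<Longrightarrow> distr M P (X i) = P"
    and "1 \<le> k" and "k < n"
    and "\<And>xs ys. length xs = k \<Longrightarrow> mset xs = mset ys \<Longrightarrow> s xs = s ys"
    and "(\<lambda>y. s (map y [0..<k])) \<in> borel_measurable (PiM {..<k} (\<lambda>_. P))"
    and "integrable (PiM {..<k} (\<lambda>_. P)) (\<lambda>y. (s (map y [0..<k]))\<^sup>2)"
  shows "(\<integral>\<omega>. psIJ_U s X n k \<omega> \<partial>M) =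
    (\<Sum>j=1..k. ((real (n - k) / real n)\<^sup>2 * (real j / (1 - real j / real n)))
               * real (k choose j) ^ 2 / real (n choose j) * hvar s P k j)"
proof -
  interpret symmetric_kernel P s k
    by (rule symmetric_kernel.intro[OF assms(2,7-9)])
  interpret M: prob_space M by fact
  let ?R = "\<lambda>\<omega>. \<lambda>i\<in>{1..n}. X i \<omega>"
  have "?R \<in> measurable M (PiP {1..n})"
    using assms(3) unfolding M.indep_vars_def by (intro measurable_restrict) blast
  moreover have "distr M (PiP {1..n}) ?R = PiP {1..n}"
    using assms(3-6) by (intro M.distr_restrict_iid) auto
  ultimately have "(\<integral>\<omega>. psIJ_U s (\<lambda>i \<omega>. \<omega> i) n k (?R \<omega>) \<partial>M) =
      (\<integral>\<omega>. psIJ_U s (\<lambda>i \<omega>. \<omega> i) n k \<omega> \<partial>PiP {1..n})"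
    using integral_distr[OF _ measurable_psIJ_U[OF assms(5,6)]] by metis
  then show ?thesis
    unfolding psIJ_U_restrict[of s X n k] integral_psIJ_U_PiP[OF assms(5,6)] .
qed

end
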